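(* Let $A$ be an Archimedean semiprime $f$-algebra and let $A_b=\{a\in A: a^2\le\mu|a| \text{ for some }\mu\in(0,\infty)\}$. Then $A_b$ is simultaneously a subalgebra and an order ideal of $A$.
   Context: An $f$-algebra is a real associative algebra that is a vector lattice with $A_+A_+\subseteq A_+$ and such that $a\wedge b=0$ implies $ac\wedge b=ca\wedge b=0$ for all $c\in A_+$; it is semiprime if $0$ is its only nilpotent element. An order ideal is a solid vector subspace. *)

theory Defs
  imports Complex_Main
begin

definition vabs :: "'a::{ordered_real_vector, lattice} \<Rightarrow> 'a" where
  "vabs a = sup a (- a)"

definition archimedean_vl :: "'a::{ordered_real_vector, lattice} itself \<Rightarrow> bool" where
  "archimedean_vl _ \<longleftrightarrow>
     (\<forall>a b :: 'a. 0 \<le> a \<longrightarrow> (\<forall>n::nat. real n *\<^sub>R a \<le> b) \<longrightarrow> a = 0)"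

definition f_algebra :: "'a::{real_algebra, ordered_real_vector, lattice} itself \<Rightarrow> bool" where
  "f_algebra _ \<longleftrightarrow>
     (\<forall>a b :: 'a. 0 \<le> a \<longrightarrow> 0 \<le> b \<longrightarrow> 0 \<le> a * b) \<and>
     (\<forall>a b c :: 'a. inf a b = 0 \<longrightarrow> 0 \<le> c \<longrightarrow> inf (a * c) b = 0 \<and> inf (c * a) b = 0)"

text \<open>pow1 a n = a^(n+1) (the algebra need not be unital).\<close>
fun pow1 :: "'a::semigroup_mult \<Rightarrow> nat \<Rightarrow> 'a" where
  "pow1 a 0 = a"
| "pow1 a (Suc n) = a * pow1 a n"

definition nilpotent_elem :: "'a::{semigroup_mult, zero} \<Rightarrow> bool" where
  "nilpotent_elem a \<longleftrightarrow> (\<exists>n. pow1 a n = 0)"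

definition semiprime :: "'a::{semigroup_mult, zero} itself \<Rightarrow> bool" where
  "semiprime _ \<longleftrightarrow> (\<forall>a :: 'a. nilpotent_elem a \<longrightarrow> a = 0)"

definition subalgebra :: "'a::real_algebra set \<Rightarrow> bool" where
  "subalgebra S \<longleftrightarrow> subspace S \<and> (\<forall>x\<in>S. \<forall>y\<in>S. x * y \<in> S)"

definition order_ideal :: "'a::{ordered_real_vector, lattice} set \<Rightarrow> bool" where
  "order_ideal I \<longleftrightarrow> subspace I \<and> (\<forall>a b. b \<in> I \<longrightarrow> vabs a \<le> vabs b \<longrightarrow> a \<in> I)"

definition bounded_part :: "'a::{real_algebra, ordered_real_vector, lattice} set" where
  "bounded_part = {a. \<exists>\<mu>::real. \<mu> > 0 \<and> a * a \<le> \<mu> *\<^sub>R vabs a}"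

end

theory Submission
  imports Defs "HOL-Library.Lattice_Algebras"
begin

text \<open>In an \<open>f\<close>-algebra \<open>x\<^sup>2 = \<bar>x\<bar>\<^sup>2\<close>, so membership of \<open>x\<close> in \<open>A\<^sub>b\<close> depends on \<open>\<bar>x\<bar>\<close> only.
  The key fact is that semiprimeness turns \<open>a\<^sup>2 \<le> \<mu>a\<close> (for \<open>a \<ge> 0\<close>) into \<open>ba \<le> \<mu>b\<close> for all
  \<open>b \<ge> 0\<close>: the positive part \<open>w\<^sup>+\<close> of \<open>w = ba - \<mu>b\<close> satisfies \<open>w\<^sup>+a = 0\<close> because \<open>wa = b(a\<^sup>2 - \<mu>a) \<le> 0\<close>,
  hence (by semiprimeness) is disjoint from \<open>a\<close> and therefore from \<open>ba\<close>, yet \<open>w\<^sup>+ \<le> ba\<close>; so \<open>w\<^sup>+ = 0\<close>.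
  For positive \<open>a, b\<close> with constants \<open>\<mu>, \<nu>\<close> this gives \<open>(a + b)\<^sup>2 \<le> (\<mu> + \<nu>)(a + b)\<close>,
  \<open>(ab)\<^sup>2 \<le> \<mu>\<nu> ab\<close>, and \<open>a\<^sup>2 \<le> ab \<le> \<mu>a\<close> when \<open>0 \<le> a \<le> b\<close>. Together with \<open>\<bar>x + y\<bar> \<le> \<bar>x\<bar> + \<bar>y\<bar>\<close>
  and \<open>\<bar>xy\<bar> \<le> \<bar>x\<bar>\<bar>y\<bar>\<close> this yields closure under sums and products and solidity.\<close>

text \<open>Note that \<open>vl.nprt a = inf a 0 \<le> 0\<close>; the usual negative part \<open>a\<^sup>-\<close> is \<open>- vl.nprt a\<close>.\<close>

interpretation vl: lattice_ab_group_add_abs vabs "(+)" "0::'a::{ordered_real_vector, lattice}"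
  "(-)" uminus "(\<le>)" "(<)" inf sup
  by unfold_locales (simp add: vabs_def)

lemma inf_pprt_minus_nprt: "inf (vl.pprt a) (- vl.nprt a) = 0"
proof -
  have "sup (vl.pprt a) (- vl.nprt a) = sup (vabs a) 0"
    by (simp add: vl.pprt_def flip: vl.pprt_neg) (simp add: vabs_def ac_simps)
  then have "sup (vl.pprt a) (- vl.nprt a) = vabs a"
    by (simp add: sup.absorb1)
  moreover have "vl.pprt a + - vl.nprt a = vabs a"
    by (simp add: vl.abs_prts)
  ultimately show ?thesis
    using vl.add_eq_inf_sup[of "vl.pprt a" "- vl.nprt a"] by simp
qed

lemma vabs_scaleR_le: "vabs (t *\<^sub>R x) \<le> \<bar>t\<bar> *\<^sub>R vabs x"
proof (cases "0 \<le> t")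
  case True
  show ?thesis
    using scaleR_left_mono[OF vl.abs_ge_self True] scaleR_left_mono[OF vl.abs_ge_minus_self True]
    by (intro vl.abs_leI) (simp_all add: True)
next
  case False
  then have "t *\<^sub>R x = \<bar>t\<bar> *\<^sub>R (- x)" and "- (t *\<^sub>R x) = \<bar>t\<bar> *\<^sub>R x"
    by simp_all
  then show ?thesis
    using scaleR_left_mono[OF vl.abs_ge_self, of "\<bar>t\<bar>"]
      scaleR_left_mono[OF vl.abs_ge_minus_self, of "\<bar>t\<bar>"]
    by (intro vl.abs_leI) simp_all
qed

lemma vabs_scaleR: "vabs (t *\<^sub>R x) = \<bar>t\<bar> *\<^sub>R vabs x"
proof (cases "t = 0")
  case False
  have "vabs x = vabs (inverse t *\<^sub>R (t *\<^sub>R x))"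
    using False by simp
  also have "\<dots> \<le> \<bar>inverse t\<bar> *\<^sub>R vabs (t *\<^sub>R x)"
    by (rule vabs_scaleR_le)
  finally have "\<bar>t\<bar> *\<^sub>R vabs x \<le> \<bar>t\<bar> *\<^sub>R (\<bar>inverse t\<bar> *\<^sub>R vabs (t *\<^sub>R x))"
    by (rule scaleR_left_mono) simp_all
  also have "\<bar>t\<bar> *\<^sub>R (\<bar>inverse t\<bar> *\<^sub>R vabs (t *\<^sub>R x)) = vabs (t *\<^sub>R x)"
    using False by simp
  finally have "\<bar>t\<bar> *\<^sub>R vabs x \<le> vabs (t *\<^sub>R x)" .
  then show ?thesis
    using vabs_scaleR_le by (rule antisym[rotated])
qed (simp add: vabs_def)

lemma zero_in_bounded_part: "0 \<in> bounded_part"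
proof -
  have "0 * 0 \<le> 1 *\<^sub>R vabs (0::'a::{real_algebra, ordered_real_vector, lattice})"
    by (simp add: vabs_def)
  then show ?thesis
    unfolding bounded_part_def using zero_less_one by blast
qed

context
  assumes f_algebra: "f_algebra TYPE('a::{real_algebra, ordered_real_vector, lattice})"
begin

lemma f_mult_nonneg: "0 \<le> a \<Longrightarrow> 0 \<le> b \<Longrightarrow> 0 \<le> (a::'a) * b"
  using f_algebra unfolding f_algebra_def by blast

lemma f_inf_mult_right: "inf a b = 0 \<Longrightarrow> 0 \<le> c \<Longrightarrow> inf (a * c) (b::'a) = 0"
  using f_algebra unfolding f_algebra_def by blast

lemma f_inf_mult_left: "inf a b = 0 \<Longrightarrow> 0 \<le> c \<Longrightarrow> inf (c * a) (b::'a) = 0"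
  using f_algebra unfolding f_algebra_def by blast

lemma f_mult_right_mono: "x \<le> y \<Longrightarrow> 0 \<le> c \<Longrightarrow> x * c \<le> (y::'a) * c"
  using f_mult_nonneg[of "y - x" c] by (simp add: algebra_simps)

lemma f_mult_left_mono: "x \<le> y \<Longrightarrow> 0 \<le> c \<Longrightarrow> c * x \<le> c * (y::'a)"
  using f_mult_nonneg[of c "y - x"] by (simp add: algebra_simps)

lemma disjoint_mult_eq_0:
  assumes "inf a b = 0"
  shows "a * (b::'a) = 0"
proof -
  have "0 \<le> a" and "0 \<le> b"
    using inf_le1[of a b] inf_le2[of a b] assms by simp_all
  have "inf (a * b) b = 0"
    using assms \<open>0 \<le> b\<close> by (rule f_inf_mult_right)
  then have "inf b (a * b) = 0"
    by (simp add: inf_commute)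
  then have "inf (a * b) (a * b) = 0"
    using \<open>0 \<le> a\<close> by (rule f_inf_mult_left)
  then show ?thesis
    by simp
qed

lemma mult_self_vabs: "x * x = vabs x * vabs (x::'a)"
proof -
  define p n where "p = vl.pprt x" and "n = - vl.nprt x"
  have "inf p n = 0"
    unfolding p_def n_def by (rule inf_pprt_minus_nprt)
  then have "p * n = 0" and "n * p = 0"
    by (simp_all add: disjoint_mult_eq_0 inf_commute)
  then have "(p - n) * (p - n) = (p + n) * (p + n)"
    by (simp add: algebra_simps)
  moreover have "x = p - n" and "vabs x = p + n"
    unfolding p_def n_def by (simp_all add: vl.abs_prts flip: vl.prts)
  ultimately show ?thesis
    by simp
qed

lemma vabs_mult_le: "vabs (x * y) \<le> vabs x * vabs (y::'a)"
proof -
  define P N where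
    "P = vl.pprt x * vl.pprt y + (- vl.nprt x) * (- vl.nprt y)" and
    "N = vl.pprt x * (- vl.nprt y) + (- vl.nprt x) * vl.pprt y"
  have "0 \<le> P" and "0 \<le> N"
    unfolding P_def N_def by (intro add_nonneg_nonneg f_mult_nonneg; simp)+
  moreover have "x * y = P - N" and "vabs x * vabs y = P + N"
    unfolding P_def N_def
    by (subst (1 2) vl.prts, simp add: algebra_simps) (simp add: vl.abs_prts algebra_simps)
  ultimately show ?thesis
    using vl.abs_triangle_ineq4[of P N] by simp
qed

lemma pprt_mult_eq_0:
  assumes "w * a \<le> 0" and "0 \<le> a"
  shows "vl.pprt w * (a::'a) = 0"
proof -
  have "inf (vl.pprt w * a) (- vl.nprt w) = 0"
    using inf_pprt_minus_nprt assms(2) by (rule f_inf_mult_right)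
  then have "inf (- vl.nprt w) (vl.pprt w * a) = 0"
    by (simp add: inf_commute)
  then have disjoint: "inf ((- vl.nprt w) * a) (vl.pprt w * a) = 0"
    using assms(2) by (rule f_inf_mult_right)
  have "w * a = vl.pprt w * a - (- vl.nprt w) * a"
    by (subst vl.prts) (simp add: algebra_simps)
  then have "vl.pprt w * a \<le> (- vl.nprt w) * a"
    using assms(1) by (simp add: vl.le_eq_neg)
  then show ?thesis
    using disjoint by (simp add: inf.absorb2)
qed

lemma bounded_part_iff_vabs:
  "x \<in> bounded_part \<longleftrightarrow> (\<exists>\<mu>>0. vabs x * vabs x \<le> \<mu> *\<^sub>R vabs (x::'a))"
  using mult_self_vabs[of x] by (simp add: bounded_part_def)

lemma bounded_part_scaleR:
  assumes "x \<in> bounded_part"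
  shows "t *\<^sub>R (x::'a) \<in> bounded_part"
proof (cases "t = 0")
  case True
  then show ?thesis
    using zero_in_bounded_part by simp
next
  case False
  obtain \<mu> where "\<mu> > 0" and \<mu>: "x * x \<le> \<mu> *\<^sub>R vabs x"
    using assms unfolding bounded_part_def by blast
  have "(t *\<^sub>R x) * (t *\<^sub>R x) = (t * t) *\<^sub>R (x * x)"
    by simp
  also have "\<dots> \<le> (t * t) *\<^sub>R (\<mu> *\<^sub>R vabs x)"
    using \<mu> by (rule scaleR_left_mono) simp
  also have "\<dots> = (\<bar>t\<bar> * \<mu>) *\<^sub>R vabs (t *\<^sub>R x)"
    by (simp add: vabs_scaleR)
  finally have "(t *\<^sub>R x) * (t *\<^sub>R x) \<le> (\<bar>t\<bar> * \<mu>) *\<^sub>R vabs (t *\<^sub>R x)" .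
  moreover have "\<bar>t\<bar> * \<mu> > 0"
    using False \<open>\<mu> > 0\<close> by simp
  ultimately show ?thesis
    unfolding bounded_part_def by blast
qed

context
  assumes semiprime: "semiprime TYPE('a)"
begin

lemma disjoint_if_mult_eq_0:
  assumes "0 \<le> a" and "0 \<le> b" and "a * b = 0"
  shows "inf a (b::'a) = 0"
proof -
  let ?m = "inf a b"
  have "0 \<le> ?m"
    using assms(1,2) by simp
  have "?m * ?m \<le> a * ?m"
    using \<open>0 \<le> ?m\<close> by (simp add: f_mult_right_mono)
  also have "\<dots> \<le> a * b"
    using inf_le2 assms(1) by (rule f_mult_left_mono)
  finally have "?m * ?m \<le> 0"
    using assms(3) by simp
  then have "pow1 ?m 1 = 0"
    using f_mult_nonneg[OF \<open>0 \<le> ?m\<close> \<open>0 \<le> ?m\<close>] by simp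
  then show ?thesis
    using semiprime unfolding semiprime_def nilpotent_elem_def by blast
qed

lemma mult_le_scaleR_if_square_le:
  assumes "0 \<le> a" and "a * a \<le> \<mu> *\<^sub>R a" and "0 \<le> \<mu>" and "0 \<le> b"
  shows "b * a \<le> \<mu> *\<^sub>R (b::'a)"
proof -
  define w where "w = b * a - \<mu> *\<^sub>R b"
  have "w * a = b * (a * a - \<mu> *\<^sub>R a)"
    unfolding w_def by (simp add: algebra_simps)
  also have "\<dots> \<le> 0"
    using f_mult_left_mono[OF assms(2) assms(4)] by (simp add: algebra_simps)
  finally have "vl.pprt w * a = 0"
    using assms(1) by (rule pprt_mult_eq_0)
  then have "inf (vl.pprt w) a = 0"
    using assms(1) by (intro disjoint_if_mult_eq_0) simp_all
  then have "inf a (vl.pprt w) = 0"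
    by (simp add: inf_commute)
  then have "inf (b * a) (vl.pprt w) = 0"
    using assms(4) by (rule f_inf_mult_left)
  moreover have "vl.pprt w \<le> b * a"
    using f_mult_nonneg[OF assms(4,1)] assms(3,4)
    unfolding w_def vl.pprt_def by (simp add: scaleR_nonneg_nonneg)
  ultimately have "vl.pprt w = 0"
    by (simp add: inf.absorb2)
  then have "w \<le> 0"
    by (simp add: vl.le_zero_iff_zero_pprt)
  then show ?thesis
    unfolding w_def by simp
qed

lemma bounded_part_solid:
  assumes "y \<in> bounded_part" and "vabs x \<le> vabs y"
  shows "(x::'a) \<in> bounded_part"
proof -
  obtain \<mu> where "\<mu> > 0" and \<mu>: "vabs y * vabs y \<le> \<mu> *\<^sub>R vabs y"
    using assms(1) unfolding bounded_part_iff_vabs by blast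
  have "vabs x * vabs x \<le> vabs x * vabs y"
    using assms(2) vl.abs_ge_zero by (rule f_mult_left_mono)
  also have "\<dots> \<le> \<mu> *\<^sub>R vabs x"
    using vl.abs_ge_zero \<mu> less_imp_le[OF \<open>\<mu> > 0\<close>] vl.abs_ge_zero
    by (rule mult_le_scaleR_if_square_le)
  finally show ?thesis
    unfolding bounded_part_iff_vabs using \<open>\<mu> > 0\<close> by blast
qed

lemma bounded_part_add:
  assumes "x \<in> bounded_part" and "y \<in> bounded_part"
  shows "x + (y::'a) \<in> bounded_part"
proof -
  define a b where "a = vabs x" and "b = vabs y"
  have "0 \<le> a" and "0 \<le> b"
    unfolding a_def b_def by simp_all
  obtain \<mu> \<nu> where "\<mu> > 0" and \<mu>: "a * a \<le> \<mu> *\<^sub>R a" and "\<nu> > 0" and \<nu>: "b * b \<le> \<nu> *\<^sub>R b"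
    using assms unfolding bounded_part_iff_vabs a_def b_def by blast
  have ab: "a * b \<le> \<nu> *\<^sub>R a"
    using \<open>0 \<le> b\<close> \<nu> less_imp_le[OF \<open>\<nu> > 0\<close>] \<open>0 \<le> a\<close> by (rule mult_le_scaleR_if_square_le)
  have ba: "b * a \<le> \<mu> *\<^sub>R b"
    using \<open>0 \<le> a\<close> \<mu> less_imp_le[OF \<open>\<mu> > 0\<close>] \<open>0 \<le> b\<close> by (rule mult_le_scaleR_if_square_le)
  have "vabs (a + b) = a + b"
    using \<open>0 \<le> a\<close> \<open>0 \<le> b\<close> by simp
  have "(a + b) * (a + b) = a * a + a * b + b * a + b * b"
    by (simp add: algebra_simps)
  also have "\<dots> \<le> \<mu> *\<^sub>R a + \<nu> *\<^sub>R a + \<mu> *\<^sub>R b + \<nu> *\<^sub>R b"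
    using \<mu> ab ba \<nu> by (intro add_mono)
  also have "\<dots> = (\<mu> + \<nu>) *\<^sub>R vabs (a + b)"
    unfolding \<open>vabs (a + b) = a + b\<close> by (simp only: scaleR_add_left scaleR_add_right ac_simps)
  finally have "a + b \<in> bounded_part"
    using \<open>\<mu> > 0\<close> \<open>\<nu> > 0\<close> unfolding bounded_part_def by (blast intro: add_pos_pos)
  moreover have "vabs (x + y) \<le> vabs (a + b)"
    using vl.abs_triangle_ineq[of x y] unfolding \<open>vabs (a + b) = a + b\<close> by (simp only: a_def b_def)
  ultimately show ?thesis
    by (rule bounded_part_solid)
qed

lemma bounded_part_mult:
  assumes "x \<in> bounded_part" and "y \<in> bounded_part"
  shows "x * (y::'a) \<in> bounded_part"
proof -
  define a b where "a = vabs x" and "b = vabs y"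
  have "0 \<le> a" and "0 \<le> b" and "0 \<le> a * b"
    unfolding a_def b_def by (simp_all add: f_mult_nonneg)
  obtain \<mu> \<nu> where "\<mu> > 0" and \<mu>: "a * a \<le> \<mu> *\<^sub>R a" and "\<nu> > 0" and \<nu>: "b * b \<le> \<nu> *\<^sub>R b"
    using assms unfolding bounded_part_iff_vabs a_def b_def by blast
  have "(a * b) * a \<le> \<mu> *\<^sub>R (a * b)"
    using \<open>0 \<le> a\<close> \<mu> less_imp_le[OF \<open>\<mu> > 0\<close>] \<open>0 \<le> a * b\<close> by (rule mult_le_scaleR_if_square_le)
  then have "((a * b) * a) * b \<le> (\<mu> *\<^sub>R (a * b)) * b"
    using \<open>0 \<le> b\<close> by (rule f_mult_right_mono)
  also have "\<dots> = \<mu> *\<^sub>R (a * (b * b))"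
    by (simp add: mult.assoc)
  also have "\<dots> \<le> \<mu> *\<^sub>R (a * (\<nu> *\<^sub>R b))"
    using f_mult_left_mono[OF \<nu> \<open>0 \<le> a\<close>] less_imp_le[OF \<open>\<mu> > 0\<close>] by (rule scaleR_left_mono)
  also have "\<dots> = (\<mu> * \<nu>) *\<^sub>R vabs (a * b)"
    using \<open>0 \<le> a * b\<close> by simp
  finally have "(a * b) * (a * b) \<le> (\<mu> * \<nu>) *\<^sub>R vabs (a * b)"
    by (simp add: mult.assoc)
  then have "a * b \<in> bounded_part"
    using \<open>\<mu> > 0\<close> \<open>\<nu> > 0\<close> unfolding bounded_part_def by (blast intro: mult_pos_pos)
  moreover have "vabs (x * y) \<le> vabs (a * b)"
    using \<open>0 \<le> a * b\<close> vabs_mult_le[of x y] unfolding a_def b_def by simp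
  ultimately show ?thesis
    by (rule bounded_part_solid)
qed

end

end

theorem theorem6:
  assumes "f_algebra TYPE('a::{real_algebra, ordered_real_vector, lattice})"
    and "archimedean_vl TYPE('a)"
    and "semiprime TYPE('a)"
  shows "subalgebra (bounded_part :: 'a set) \<and> order_ideal (bounded_part :: 'a set)"
proof -
  have "subspace (bounded_part :: 'a set)"
    unfolding subspace_def
    by (simp add: zero_in_bounded_part bounded_part_add[OF assms(1,3)] bounded_part_scaleR[OF assms(1)])
  moreover have "x * y \<in> bounded_part" if "x \<in> bounded_part" and "y \<in> bounded_part" for x y :: 'a
    using assms(1,3) that by (rule bounded_part_mult)
  moreover have "x \<in> bounded_part" if "y \<in> bounded_part" and "vabs x \<le> vabs y" for x y :: 'a
    using assms(1,3) that by (rule bounded_part_solid)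
  ultimately show ?thesis
    unfolding subalgebra_def order_ideal_def by blast
qed

end
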